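(* Let $R$ be an ideal QRF with a faithful, possibly projective, unitary representation $U_R(G)=\mathcal{G}_R$ of $G=\mathbb{Z}_2^{\times(n-k)}$ on $\mathcal{H}_R\simeq(\mathbb{C}^2)^{\otimes(n-k)}$ such that $-I_R\notin\mathcal{G}_R$. For each covariant orthonormal orientation basis $\{\ket g_R\}_{g\in G}$ of $\mathcal{H}_R$, the map $\hat U_R:\hat G\to\mathrm{Aut}(\mathcal{H}_R)$, $\hat U^\chi_R=\sum_{g\in G}\chi(g)\ket g\!\bra g_R$, is a unitary representation of $\hat G$ that is dual to $\mathcal{G}_R$: $U^g_R\hat U^\chi_R=\chi(g)\hat U^\chi_RU^g_R$ for all $g\in G$, $\chi\in\hat G$. Conversely, each unitary representation $\hat U_R$ of $\hat G$ on $\mathcal{H}_R$ dual to $\mathcal{G}_R$ gives rise to a covariant orthonormal orientation basis of $\mathcal{H}_R$. Furthermore, the elements of any such $\hat{\mathcal{G}}_R=\hat U_R(\hat G)$ square to the identity and satisfy $\mathrm{Tr}(\hat U^\chi_R\hat U^\eta_R)=2^{n-k}\delta_{\chi,\eta}$ for all $\chi,\eta\in\hat G$.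
   Context: $G=\mathbb{Z}_2^{\times(n-k)}$ (neutral element $e$) and $\hat G$ is its group of characters $\chi:G\to\{\pm1\}$ (pointwise product). A possibly projective unitary representation satisfies $U^g_RU^h_R=c(g,h)U^{gh}_R$ with phases $|c(g,h)|=1$, $U^e_R=I_R$, $c(g,e)=c(e,g)=1$, the cocycle condition $c(g,hk)c(h,k)=c(g,h)c(gh,k)$, and (by a choice of phases assumed throughout) $c(g,g^{-1})=1$ for all $g$. A covariant orthonormal orientation basis is an orthonormal basis $\{\ket g_R\}_{g\in G}$ of $\mathcal{H}_R$ with $U^g_R\ket h_R=c(g,h)\ket{gh}_R$ for all $g,h$; a QRF admitting one is called ideal. A unitary representation $\hat U_R$ of $\hat G$ on $\mathcal{H}_R$ is dual to $\mathcal{G}_R$ if $U^g_R\hat U^\chi_R=\chi(g)\hat U^\chi_RU^g_R$ for all $g,\chi$. *)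

theory Defs
  imports "Jordan_Normal_Form.Matrix"
begin

text \<open>The group G = Z_2^m (m = n - k), elements are boolean lists of length m,
  group law = componentwise xor, neutral element = all False.
  Every element is its own inverse.\<close>

definition grp :: "nat \<Rightarrow> bool list set" where
  "grp m = {xs. length xs = m}"

definition gmult :: "bool list \<Rightarrow> bool list \<Rightarrow> bool list" where
  "gmult xs ys = map2 (\<lambda>a b. a \<noteq> b) xs ys"

definition gunit :: "nat \<Rightarrow> bool list" where
  "gunit m = replicate m False"

definition chars :: "nat \<Rightarrow> (bool list \<Rightarrow> complex) set" where
  "chars m = {\<chi>. (\<forall>g\<in>grp m. \<chi> g = 1 \<or> \<chi> g = -1)
               \<and> (\<forall>g\<in>grp m. \<forall>h\<in>grp m. \<chi> (gmult g h) = \<chi> g * \<chi> h)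
               \<and> (\<forall>g. g \<notin> grp m \<longrightarrow> \<chi> g = 0)}"

definition cmult :: "(bool list \<Rightarrow> complex) \<Rightarrow> (bool list \<Rightarrow> complex) \<Rightarrow> bool list \<Rightarrow> complex" where
  "cmult \<chi> \<eta> = (\<lambda>g. \<chi> g * \<eta> g)"

definition cunit :: "nat \<Rightarrow> bool list \<Rightarrow> complex" where
  "cunit m = (\<lambda>g. if g \<in> grp m then 1 else 0)"

definition adj :: "complex mat \<Rightarrow> complex mat" where
  "adj A = mat (dim_col A) (dim_row A) (\<lambda>(i,j). cnj (A $$ (j,i)))"

definition unitary_op :: "nat \<Rightarrow> complex mat \<Rightarrow> bool" where
  "unitary_op d A \<longleftrightarrow> A \<in> carrier_mat d d \<and> adj A * A = 1\<^sub>m d \<and> A * adj A = 1\<^sub>m d"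

definition tr :: "complex mat \<Rightarrow> complex" where
  "tr A = (\<Sum>i<dim_row A. A $$ (i,i))"

definition ip :: "complex vec \<Rightarrow> complex vec \<Rightarrow> complex" where
  "ip v w = (\<Sum>i<dim_vec v. cnj (v $ i) * w $ i)"

definition proj_rep :: "nat \<Rightarrow> (bool list \<Rightarrow> complex mat) \<Rightarrow> (bool list \<Rightarrow> bool list \<Rightarrow> complex) \<Rightarrow> bool" where
  "proj_rep m U c \<longleftrightarrow>
     (\<forall>g\<in>grp m. unitary_op (2^m) (U g))
   \<and> (\<forall>g\<in>grp m. \<forall>h\<in>grp m. U g * U h = c g h \<cdot>\<^sub>m U (gmult g h))
   \<and> U (gunit m) = 1\<^sub>m (2^m)
   \<and> (\<forall>g\<in>grp m. \<forall>h\<in>grp m. cmod (c g h) = 1)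
   \<and> (\<forall>g\<in>grp m. c g (gunit m) = 1 \<and> c (gunit m) g = 1)
   \<and> (\<forall>g\<in>grp m. \<forall>h\<in>grp m. \<forall>k\<in>grp m. c g (gmult h k) * c h k = c g h * c (gmult g h) k)
   \<and> (\<forall>g\<in>grp m. c g g = 1)"

definition orth_basis :: "nat \<Rightarrow> (bool list \<Rightarrow> complex vec) \<Rightarrow> bool" where
  "orth_basis m ket \<longleftrightarrow>
     (\<forall>g\<in>grp m. ket g \<in> carrier_vec (2^m))
   \<and> (\<forall>g\<in>grp m. \<forall>h\<in>grp m. ip (ket g) (ket h) = (if g = h then 1 else 0))
   \<and> (\<forall>v\<in>carrier_vec (2^m). \<exists>a. v = vec (2^m) (\<lambda>i. \<Sum>g\<in>grp m. a g * ket g $ i))"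

definition covariant_basis ::
  "nat \<Rightarrow> (bool list \<Rightarrow> complex mat) \<Rightarrow> (bool list \<Rightarrow> bool list \<Rightarrow> complex) \<Rightarrow> (bool list \<Rightarrow> complex vec) \<Rightarrow> bool" where
  "covariant_basis m U c ket \<longleftrightarrow> orth_basis m ket
     \<and> (\<forall>g\<in>grp m. \<forall>h\<in>grp m. U g *\<^sub>v ket h = c g h \<cdot>\<^sub>v ket (gmult g h))"

definition diag_op :: "nat \<Rightarrow> (bool list \<Rightarrow> complex vec) \<Rightarrow> (bool list \<Rightarrow> complex) \<Rightarrow> complex mat" where
  "diag_op m ket \<chi> = mat (2^m) (2^m) (\<lambda>(i,j). \<Sum>g\<in>grp m. \<chi> g * (ket g $ i) * cnj (ket g $ j))"

definition dual_group_rep :: "nat \<Rightarrow> ((bool list \<Rightarrow> complex) \<Rightarrow> complex mat) \<Rightarrow> bool" where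
  "dual_group_rep m V \<longleftrightarrow>
     (\<forall>\<chi>\<in>chars m. unitary_op (2^m) (V \<chi>))
   \<and> (\<forall>\<chi>\<in>chars m. \<forall>\<eta>\<in>chars m. V (cmult \<chi> \<eta>) = V \<chi> * V \<eta>)
   \<and> V (cunit m) = 1\<^sub>m (2^m)"

definition is_dual :: "nat \<Rightarrow> (bool list \<Rightarrow> complex mat) \<Rightarrow> ((bool list \<Rightarrow> complex) \<Rightarrow> complex mat) \<Rightarrow> bool" where
  "is_dual m U V \<longleftrightarrow>
     (\<forall>g\<in>grp m. \<forall>\<chi>\<in>chars m. U g * V \<chi> = \<chi> g \<cdot>\<^sub>m (V \<chi> * U g))"

end

theory Submission
  imports Defs "Jordan_Normal_Form.Determinant"
begin

(* Given a covariant orthonormal basis, the operators sum_g chi(g) |g><g| are simultaneously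
   diagonal, so they multiply like the characters; U^g maps |h> to a multiple of |gh>, on which
   chi acts by chi(g) chi(h), which gives the twisted commutation.
   Conversely, let V be a dual representation. For chi <> 1 pick x with chi(x) = -1; then U^x
   conjugates V^chi into -V^chi, so tr V^chi = 0. Hence the average sum_chi V^chi has trace 2^m,
   and a normalised nonzero column u of it is fixed by every V^chi. The vectors U^g u are
   eigenvectors of V^chi for the eigenvalue chi(g); since characters separate points they are
   orthonormal, hence a covariant basis, and V^chi is diagonal in it with entries chi(g).
   The trace formula is tr V^(chi eta) together with the same vanishing of traces. *)

section \<open>The group and its characters\<close>

lemma finite_grp: "finite (grp m)"
  unfolding grp_def using finite_lists_length_eq[of "UNIV :: bool set" m] by simp

lemma card_grp: "card (grp m) = 2 ^ m"
  unfolding grp_def using card_lists_length_eq[of "UNIV :: bool set" m] by simp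

lemma gmult_in_grp: "g \<in> grp m \<Longrightarrow> h \<in> grp m \<Longrightarrow> gmult g h \<in> grp m"
  unfolding grp_def gmult_def by simp

lemma char_values: "\<chi> \<in> chars m \<Longrightarrow> g \<in> grp m \<Longrightarrow> \<chi> g = 1 \<or> \<chi> g = -1"
  unfolding chars_def by blast

lemma char_square: "\<chi> \<in> chars m \<Longrightarrow> g \<in> grp m \<Longrightarrow> \<chi> g * \<chi> g = 1"
  using char_values by fastforce

lemma cnj_char: "\<chi> \<in> chars m \<Longrightarrow> g \<in> grp m \<Longrightarrow> cnj (\<chi> g) = \<chi> g"
  using char_values by fastforce

lemma char_gmult: "\<chi> \<in> chars m \<Longrightarrow> g \<in> grp m \<Longrightarrow> h \<in> grp m \<Longrightarrow> \<chi> (gmult g h) = \<chi> g * \<chi> h"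
  unfolding chars_def by blast

lemma char_outside_grp: "\<chi> \<in> chars m \<Longrightarrow> g \<notin> grp m \<Longrightarrow> \<chi> g = 0"
  unfolding chars_def by blast

lemma cunit_in_chars: "cunit m \<in> chars m"
  unfolding chars_def cunit_def by (auto simp: gmult_in_grp)

lemma cmult_in_chars:
  assumes "\<chi> \<in> chars m" "\<eta> \<in> chars m"
  shows "cmult \<chi> \<eta> \<in> chars m"
  unfolding chars_def cmult_def
proof (intro CollectI conjI ballI allI impI)
  fix g assume "g \<in> grp m"
  then show "\<chi> g * \<eta> g = 1 \<or> \<chi> g * \<eta> g = -1"
    using char_values[OF assms(1)] char_values[OF assms(2)] by fastforce
qed (use assms in \<open>simp_all add: char_gmult char_outside_grp mult_ac\<close>)

lemma cmult_self: "\<chi> \<in> chars m \<Longrightarrow> cmult \<chi> \<chi> = cunit m"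
  unfolding cmult_def cunit_def by (auto simp: char_square char_outside_grp)

lemma cmult_cmult_cancel: "\<chi> \<in> chars m \<Longrightarrow> \<psi> \<in> chars m \<Longrightarrow> cmult \<chi> (cmult \<chi> \<psi>) = \<psi>"
  unfolding cmult_def
  by (rule ext) (metis char_outside_grp char_square mult.assoc mult_1 mult_zero_right)

lemma cmult_eq_cunit_iff:
  assumes "\<chi> \<in> chars m" "\<eta> \<in> chars m"
  shows "cmult \<chi> \<eta> = cunit m \<longleftrightarrow> \<chi> = \<eta>"
proof
  have "cmult \<chi> (cunit m) = \<chi>"
    using assms(1) unfolding cmult_def cunit_def by (intro ext) (simp add: char_outside_grp)
  moreover assume "cmult \<chi> \<eta> = cunit m"
  ultimately have "cmult \<chi> (cmult \<chi> \<eta>) = \<chi>" by simp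
  then show "\<chi> = \<eta>" using cmult_cmult_cancel[OF assms] by simp
qed (use assms in \<open>simp add: cmult_self\<close>)

lemma finite_chars: "finite (chars m)"
proof (rule finite_subset)
  show "chars m \<subseteq> {f. \<forall>x. (x \<in> grp m \<longrightarrow> f x \<in> {1, -1}) \<and> (x \<notin> grp m \<longrightarrow> f x = 0)}"
    unfolding chars_def by auto
  show "finite {f. \<forall>x. (x \<in> grp m \<longrightarrow> f x \<in> {1, -1 :: complex}) \<and> (x \<notin> grp m \<longrightarrow> f x = 0)}"
    by (rule finite_set_of_finite_funs) (auto simp: finite_grp)
qed

lemma bij_betw_cmult: "\<chi> \<in> chars m \<Longrightarrow> bij_betw (cmult \<chi>) (chars m) (chars m)"
  by (rule bij_betwI[where g = "cmult \<chi>"]) (auto simp: cmult_in_chars cmult_cmult_cancel)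

lemma nontrivial_char_takes_minus_1:
  assumes "\<psi> \<in> chars m" "\<psi> \<noteq> cunit m"
  shows "\<exists>x\<in>grp m. \<psi> x = -1"
proof -
  obtain x where "\<psi> x \<noteq> cunit m x" using assms(2) by blast
  then show ?thesis
    using assms(1) char_values char_outside_grp unfolding cunit_def by metis
qed

text \<open>The coordinate characters \<open>x \<mapsto> (-1)^(x ! i)\<close> already separate points.\<close>

lemma chars_separate_points:
  assumes g: "g \<in> grp m" and h: "h \<in> grp m" and "g \<noteq> h"
  shows "\<exists>\<chi>\<in>chars m. \<chi> g * \<chi> h = -1"
proof -
  have "length g = m" "length h = m" using g h unfolding grp_def by auto
  then obtain i where i: "i < m" "g ! i \<noteq> h ! i"
    using \<open>g \<noteq> h\<close> by (auto simp: list_eq_iff_nth_eq)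
  define \<chi> where "\<chi> = (\<lambda>x. if x \<in> grp m then (if x ! i then -1 else 1) else (0 :: complex))"
  have "\<chi> \<in> chars m"
    unfolding chars_def
  proof (intro CollectI conjI ballI allI impI)
    fix x y assume x: "x \<in> grp m" and y: "y \<in> grp m"
    then have "gmult x y ! i = (x ! i \<noteq> y ! i)" using i unfolding grp_def gmult_def by simp
    then show "\<chi> (gmult x y) = \<chi> x * \<chi> y"
      unfolding \<chi>_def using x y gmult_in_grp[OF x y] by simp
  qed (simp_all add: \<chi>_def)
  moreover have "\<chi> g * \<chi> h = -1" using i g h unfolding \<chi>_def by (cases "g ! i") simp_all
  ultimately show ?thesis by blast
qed

section \<open>Inner products, adjoints and traces\<close>

lemma ip_smult_left: "ip (a \<cdot>\<^sub>v x) y = cnj a * ip x y"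
  unfolding ip_def by (simp add: sum_distrib_left mult_ac)

lemma ip_smult_right: "dim_vec y = dim_vec x \<Longrightarrow> ip x (a \<cdot>\<^sub>v y) = a * ip x y"
  unfolding ip_def by (simp add: sum_distrib_left mult_ac)

lemma adj_carrier: "A \<in> carrier_mat n n \<Longrightarrow> adj A \<in> carrier_mat n n"
  unfolding adj_def by auto

lemma ip_mult_mat_vec_right:
  assumes A: "A \<in> carrier_mat n n" and x: "x \<in> carrier_vec n" and y: "y \<in> carrier_vec n"
  shows "ip x (A *\<^sub>v y) = ip (adj A *\<^sub>v x) y"
proof -
  have "ip x (A *\<^sub>v y) = (\<Sum>i<n. \<Sum>k<n. cnj (x $ i) * A $$ (i, k) * y $ k)"
    using A x y unfolding ip_def
    by (simp add: scalar_prod_def sum_distrib_left mult.assoc atLeast0LessThan)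
  also have "\<dots> = (\<Sum>k<n. \<Sum>i<n. cnj (x $ i) * A $$ (i, k) * y $ k)" by (rule sum.swap)
  also have "\<dots> = ip (adj A *\<^sub>v x) y"
    using A x y unfolding ip_def adj_def
    by (simp add: scalar_prod_def sum_distrib_left sum_distrib_right mult_ac atLeast0LessThan)
  finally show ?thesis .
qed

lemma ip_unitary:
  assumes "unitary_op n A" "x \<in> carrier_vec n" "y \<in> carrier_vec n"
  shows "ip (A *\<^sub>v x) (A *\<^sub>v y) = ip x y"
proof -
  have A: "A \<in> carrier_mat n n" and "adj A * A = 1\<^sub>m n"
    using assms(1) unfolding unitary_op_def by auto
  then have "adj A *\<^sub>v (A *\<^sub>v x) = x"
    using assms(2) assoc_mult_mat_vec[OF adj_carrier[OF A] A assms(2)] by simp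
  then show ?thesis using ip_mult_mat_vec_right[OF A _ assms(3)] A assms(2) by simp
qed

lemma unitary_eigenvectors_orthogonal:
  assumes "unitary_op n A" "x \<in> carrier_vec n" "y \<in> carrier_vec n"
    and "A *\<^sub>v x = a \<cdot>\<^sub>v x" "A *\<^sub>v y = b \<cdot>\<^sub>v y" and "cnj a * b \<noteq> 1"
  shows "ip x y = 0"
proof -
  have "ip x y = ip (A *\<^sub>v x) (A *\<^sub>v y)" using ip_unitary[OF assms(1-3)] by simp
  also have "\<dots> = cnj a * b * ip x y"
    using assms(2-5) by (simp add: ip_smult_left ip_smult_right)
  finally show ?thesis using assms(6) by (simp add: mult_cancel_right2)
qed

lemma exists_unit_multiple:
  assumes "v \<in> carrier_vec n" "v \<noteq> 0\<^sub>v n"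
  shows "\<exists>a. ip (a \<cdot>\<^sub>v v) (a \<cdot>\<^sub>v v) = 1"
proof -
  have "ip v v = v \<bullet>c v"
    using assms(1) unfolding ip_def scalar_prod_def by (simp add: atLeast0LessThan mult.commute)
  then have "ip v v > 0" using assms by simp
  define r where "r = Re (ip v v)"
  have r: "r > 0" "ip v v = of_real r"
    using \<open>ip v v > 0\<close> unfolding r_def less_complex_def by (auto simp: complex_eq_iff)
  define a where "a = complex_of_real (1 / sqrt r)"
  have "ip (a \<cdot>\<^sub>v v) (a \<cdot>\<^sub>v v) = cnj a * a * ip v v"
    by (simp add: ip_smult_left ip_smult_right mult.assoc)
  also have "\<dots> = 1"
    unfolding a_def r(2) using r(1) by (simp flip: of_real_mult)
  finally show ?thesis by blast
qed

lemma smult_mat_mult_vec: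
  "A \<in> carrier_mat n k \<Longrightarrow> v \<in> carrier_vec k \<Longrightarrow> (a \<cdot>\<^sub>m A) *\<^sub>v v = a \<cdot>\<^sub>v (A *\<^sub>v (v :: complex vec))"
  by (rule eq_vecI) (auto simp: scalar_prod_def sum_distrib_left mult_ac)

lemma tr_mult_comm:
  assumes "A \<in> carrier_mat n k" "B \<in> carrier_mat k n"
  shows "tr (A * B) = tr (B * (A :: complex mat))"
proof -
  have "tr (A * B) = (\<Sum>i<n. \<Sum>j<k. A $$ (i, j) * B $$ (j, i))"
    using assms unfolding tr_def by (simp add: scalar_prod_def atLeast0LessThan)
  also have "\<dots> = (\<Sum>j<k. \<Sum>i<n. B $$ (j, i) * A $$ (i, j))"
    by (subst sum.swap) (simp add: mult.commute)
  also have "\<dots> = tr (B * A)"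
    using assms unfolding tr_def by (simp add: scalar_prod_def atLeast0LessThan)
  finally show ?thesis .
qed

lemma tr_smult: "A \<in> carrier_mat n n \<Longrightarrow> tr (a \<cdot>\<^sub>m A) = a * tr (A :: complex mat)"
  unfolding tr_def by (simp add: sum_distrib_left)

lemma tr_one: "tr (1\<^sub>m n :: complex mat) = of_nat n"
  unfolding tr_def by simp

lemma tr_eq_0_if_anticommutes_with_unitary:
  assumes W: "unitary_op n W" and A: "A \<in> carrier_mat n n"
    and anti: "W * A = (-1) \<cdot>\<^sub>m (A * W)"
  shows "tr A = 0"
proof -
  have Wc: "W \<in> carrier_mat n n" and W1: "adj W * W = 1\<^sub>m n" and W2: "W * adj W = 1\<^sub>m n"
    using W unfolding unitary_op_def by auto
  note aW = adj_carrier[OF Wc]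
  have "tr A = tr (adj W * (W * A))"
    using assoc_mult_mat[OF aW Wc A] W1 A by simp
  also have "\<dots> = tr ((W * A) * adj W)"
    by (rule tr_mult_comm[OF aW mult_carrier_mat[OF Wc A]])
  also have "(W * A) * adj W = (-1) \<cdot>\<^sub>m (A * (W * adj W))"
    unfolding anti using assoc_mult_mat[OF A Wc aW] A Wc aW
    by (simp add: mult_smult_assoc_mat[of _ n n _ n])
  also have "tr \<dots> = - tr A"
    using W2 A by (simp add: tr_smult[of _ n])
  finally show ?thesis by simp
qed

text \<open>The matrix \<open>K\<close> with columns \<open>ket g\<close> satisfies \<open>K\<^sup>* K = 1\<close>; as \<open>K\<close> is square,
  also \<open>K K\<^sup>* = 1\<close>.\<close>

lemma orthonormal_resolution_of_identity:
  fixes ket :: "'i \<Rightarrow> complex vec"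
  assumes I: "finite I" "card I = n"
    and car: "\<forall>g\<in>I. ket g \<in> carrier_vec n"
    and orth: "\<forall>g\<in>I. \<forall>h\<in>I. ip (ket g) (ket h) = (if g = h then 1 else 0)"
    and ij: "i < n" "j < n"
  shows "(\<Sum>g\<in>I. ket g $ i * cnj (ket g $ j)) = (if i = j then 1 else 0)"
proof -
  obtain f where f: "bij_betw f {..<n} I"
    using ex_bij_betw_nat_finite[OF I(1)] I(2) by (auto simp: atLeast0LessThan)
  then have fI: "k < n \<Longrightarrow> f k \<in> I" for k by (auto dest: bij_betwE)
  have f_eq: "k < n \<Longrightarrow> l < n \<Longrightarrow> f k = f l \<longleftrightarrow> k = l" for k l
    using f by (auto simp: bij_betw_def inj_on_def)
  define K where "K = mat n n (\<lambda>(i, k). ket (f k) $ i)"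
  have K: "K \<in> carrier_mat n n" unfolding K_def by simp
  have "adj K * K = 1\<^sub>m n"
  proof (rule eq_matI)
    fix k l assume "k < dim_row (1\<^sub>m n :: complex mat)" "l < dim_col (1\<^sub>m n :: complex mat)"
    then have kl: "k < n" "l < n" by auto
    moreover have "dim_vec (ket (f k)) = n" using car fI kl by auto
    ultimately have "(adj K * K) $$ (k, l) = ip (ket (f k)) (ket (f l))"
      unfolding K_def adj_def ip_def by (simp add: scalar_prod_def atLeast0LessThan)
    then show "(adj K * K) $$ (k, l) = 1\<^sub>m n $$ (k, l)" using kl orth fI f_eq by simp
  qed (auto simp: K_def adj_def)
  then have KK: "K * adj K = 1\<^sub>m n" by (rule mat_mult_left_right_inverse[OF adj_carrier[OF K] K])
  have "(\<Sum>k<n. ket (f k) $ i * cnj (ket (f k) $ j)) = (K * adj K) $$ (i, j)"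
    using ij unfolding K_def adj_def by (simp add: scalar_prod_def atLeast0LessThan)
  also have "\<dots> = (if i = j then 1 else 0)" using KK ij by simp
  finally show ?thesis using sum.reindex_bij_betw[OF f, of "\<lambda>g. ket g $ i * cnj (ket g $ j)"] by simp
qed
section \<open>Orthonormal families indexed by the group\<close>

definition orthonormal_family :: "nat \<Rightarrow> (bool list \<Rightarrow> complex vec) \<Rightarrow> bool" where
  "orthonormal_family m ket \<longleftrightarrow> (\<forall>g\<in>grp m. ket g \<in> carrier_vec (2 ^ m))
     \<and> (\<forall>g\<in>grp m. \<forall>h\<in>grp m. ip (ket g) (ket h) = (if g = h then 1 else 0))"

lemma orthonormal_family_carrier:
  "orthonormal_family m ket \<Longrightarrow> g \<in> grp m \<Longrightarrow> ket g \<in> carrier_vec (2 ^ m)"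
  unfolding orthonormal_family_def by blast

lemma orthonormal_family_dim:
  "orthonormal_family m ket \<Longrightarrow> g \<in> grp m \<Longrightarrow> dim_vec (ket g) = 2 ^ m"
  using orthonormal_family_carrier carrier_vecD by metis

lemma orthonormal_family_ip:
  "orthonormal_family m ket \<Longrightarrow> g \<in> grp m \<Longrightarrow> h \<in> grp m \<Longrightarrow>
    (\<Sum>j<2 ^ m. cnj (ket g $ j) * ket h $ j) = (if g = h then 1 else 0)"
  unfolding orthonormal_family_def ip_def by (metis carrier_vecD)

lemma orthonormal_family_resolution_of_identity:
  assumes "orthonormal_family m ket" "i < 2 ^ m" "j < 2 ^ m"
  shows "(\<Sum>g\<in>grp m. ket g $ i * cnj (ket g $ j)) = (if i = j then 1 else 0)"
  using assms unfolding orthonormal_family_def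
  by (intro orthonormal_resolution_of_identity) (auto simp: finite_grp card_grp)

lemma orth_basis_iff_orthonormal_family: "orth_basis m ket \<longleftrightarrow> orthonormal_family m ket"
proof
  assume o: "orthonormal_family m ket"
  have "\<exists>a. v = vec (2 ^ m) (\<lambda>i. \<Sum>g\<in>grp m. a g * ket g $ i)"
    if v: "v \<in> carrier_vec (2 ^ m)" for v
  proof (intro exI eq_vecI)
    fix i assume "i < dim_vec (vec (2 ^ m) (\<lambda>i. \<Sum>g\<in>grp m. ip (ket g) v * ket g $ i))"
    then have i: "i < 2 ^ m" by simp
    have "(\<Sum>g\<in>grp m. ip (ket g) v * ket g $ i)
        = (\<Sum>g\<in>grp m. \<Sum>j<2 ^ m. ket g $ i * cnj (ket g $ j) * v $ j)"
      unfolding ip_def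
      by (intro sum.cong refl) (simp add: orthonormal_family_dim[OF o] sum_distrib_left sum_distrib_right mult_ac)
    also have "\<dots> = (\<Sum>j<2 ^ m. \<Sum>g\<in>grp m. ket g $ i * cnj (ket g $ j) * v $ j)"
      by (rule sum.swap)
    also have "\<dots> = (\<Sum>j<2 ^ m. if i = j then v $ j else 0)"
      using i
      by (intro sum.cong refl) (simp add: sum_distrib_right[symmetric] orthonormal_family_resolution_of_identity[OF o])
    also have "\<dots> = v $ i" using i by simp
    finally show "v $ i = vec (2 ^ m) (\<lambda>i. \<Sum>g\<in>grp m. ip (ket g) v * ket g $ i) $ i"
      using i by simp
  qed (use v in simp)
  then show "orth_basis m ket" using o unfolding orth_basis_def orthonormal_family_def by blast
qed (simp add: orth_basis_def orthonormal_family_def)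

lemma mat_entry_via_orthonormal_family:
  assumes o: "orthonormal_family m ket" and A: "A \<in> carrier_mat (2 ^ m) (2 ^ m)"
    and ij: "i < 2 ^ m" "j < 2 ^ m"
  shows "A $$ (i, j) = (\<Sum>g\<in>grp m. (A *\<^sub>v ket g) $ i * cnj (ket g $ j))"
proof -
  have "(\<Sum>g\<in>grp m. (A *\<^sub>v ket g) $ i * cnj (ket g $ j))
      = (\<Sum>g\<in>grp m. \<Sum>k<2 ^ m. A $$ (i, k) * (ket g $ k * cnj (ket g $ j)))"
    using A ij
    by (intro sum.cong refl)
      (simp add: orthonormal_family_dim[OF o] scalar_prod_def row_def sum_distrib_left sum_distrib_right
        mult_ac atLeast0LessThan)
  also have "\<dots> = (\<Sum>k<2 ^ m. \<Sum>g\<in>grp m. A $$ (i, k) * (ket g $ k * cnj (ket g $ j)))"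
    by (rule sum.swap)
  also have "\<dots> = A $$ (i, j)"
    using ij
    by (simp add: sum_distrib_left[symmetric] orthonormal_family_resolution_of_identity[OF o])
      (simp add: if_distrib sum.delta' cong: if_cong)
  finally show ?thesis by simp
qed

lemma mat_eq_if_agree_on_orthonormal_family:
  assumes o: "orthonormal_family m ket"
    and A: "A \<in> carrier_mat (2 ^ m) (2 ^ m)" and B: "B \<in> carrier_mat (2 ^ m) (2 ^ m)"
    and eq: "\<And>h. h \<in> grp m \<Longrightarrow> A *\<^sub>v ket h = B *\<^sub>v ket h"
  shows "A = B"
proof (rule eq_matI)
  fix i j assume "i < dim_row B" "j < dim_col B"
  then have ij: "i < 2 ^ m" "j < 2 ^ m" using B by auto
  show "A $$ (i, j) = B $$ (i, j)"
    unfolding mat_entry_via_orthonormal_family[OF o A ij] mat_entry_via_orthonormal_family[OF o B ij]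
    using eq by simp
qed (use A B in auto)

lemma diag_op_carrier: "diag_op m ket f \<in> carrier_mat (2 ^ m) (2 ^ m)"
  unfolding diag_op_def by simp

lemma diag_op_mult_ket:
  assumes o: "orthonormal_family m ket" and h: "h \<in> grp m"
  shows "diag_op m ket f *\<^sub>v ket h = f h \<cdot>\<^sub>v ket h"
proof (rule eq_vecI)
  have car: "ket h \<in> carrier_vec (2 ^ m)" using orthonormal_family_carrier[OF o h] .
  fix i assume "i < dim_vec (f h \<cdot>\<^sub>v ket h)"
  then have i: "i < 2 ^ m" using car by simp
  have "(diag_op m ket f *\<^sub>v ket h) $ i
      = (\<Sum>j<2 ^ m. \<Sum>g\<in>grp m. f g * ket g $ i * (cnj (ket g $ j) * ket h $ j))"
    using i car unfolding diag_op_def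
    by (simp add: scalar_prod_def sum_distrib_left sum_distrib_right mult_ac atLeast0LessThan)
  also have "\<dots> = (\<Sum>g\<in>grp m. \<Sum>j<2 ^ m. f g * ket g $ i * (cnj (ket g $ j) * ket h $ j))"
    by (rule sum.swap)
  also have "\<dots> = f h * ket h $ i"
    using h
    by (simp add: sum_distrib_left[symmetric] orthonormal_family_ip[OF o])
      (simp add: if_distrib sum.delta' finite_grp cong: if_cong)
  finally show "(diag_op m ket f *\<^sub>v ket h) $ i = (f h \<cdot>\<^sub>v ket h) $ i" using i car by simp
qed (use orthonormal_family_carrier[OF o h] in \<open>simp add: diag_op_def\<close>)

lemma diag_op_mult:
  assumes o: "orthonormal_family m ket"
  shows "diag_op m ket f * diag_op m ket f' = diag_op m ket (\<lambda>g. f g * f' g)"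
proof (rule mat_eq_if_agree_on_orthonormal_family[OF o])
  fix h assume h: "h \<in> grp m"
  note car = orthonormal_family_carrier[OF o h]
  have "diag_op m ket f * diag_op m ket f' *\<^sub>v ket h = diag_op m ket f *\<^sub>v (diag_op m ket f' *\<^sub>v ket h)"
    by (rule assoc_mult_mat_vec[OF diag_op_carrier diag_op_carrier car])
  also have "\<dots> = (f h * f' h) \<cdot>\<^sub>v ket h"
    using car
    by (simp add: diag_op_mult_ket[OF o h] mult_mat_vec[OF diag_op_carrier] smult_smult_assoc mult.commute)
  finally show "diag_op m ket f * diag_op m ket f' *\<^sub>v ket h = diag_op m ket (\<lambda>g. f g * f' g) *\<^sub>v ket h"
    by (simp add: diag_op_mult_ket[OF o h])
qed (auto simp: diag_op_carrier intro!: mult_carrier_mat[of _ "2 ^ m" "2 ^ m"])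

lemma diag_op_eq_one:
  assumes o: "orthonormal_family m ket" and f: "\<And>g. g \<in> grp m \<Longrightarrow> f g = 1"
  shows "diag_op m ket f = 1\<^sub>m (2 ^ m)"
  using orthonormal_family_carrier[OF o]
  by (intro mat_eq_if_agree_on_orthonormal_family[OF o]) (auto simp: diag_op_carrier diag_op_mult_ket[OF o] f)

lemma adj_diag_op_char:
  assumes "\<chi> \<in> chars m"
  shows "adj (diag_op m ket \<chi>) = diag_op m ket \<chi>"
proof (rule eq_matI)
  fix i j assume "i < dim_row (diag_op m ket \<chi>)" "j < dim_col (diag_op m ket \<chi>)"
  then show "adj (diag_op m ket \<chi>) $$ (i, j) = diag_op m ket \<chi> $$ (i, j)"
    using assms unfolding adj_def diag_op_def by (simp add: cnj_sum cnj_char mult_ac)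
qed (auto simp: adj_def diag_op_def)

section \<open>Dual representations\<close>

lemma proj_rep_unitary: "proj_rep m U c \<Longrightarrow> g \<in> grp m \<Longrightarrow> unitary_op (2 ^ m) (U g)"
  unfolding proj_rep_def by blast

lemma proj_rep_carrier: "proj_rep m U c \<Longrightarrow> g \<in> grp m \<Longrightarrow> U g \<in> carrier_mat (2 ^ m) (2 ^ m)"
  using proj_rep_unitary unfolding unitary_op_def by blast

lemma proj_rep_mult:
  "proj_rep m U c \<Longrightarrow> g \<in> grp m \<Longrightarrow> h \<in> grp m \<Longrightarrow> U g * U h = c g h \<cdot>\<^sub>m U (gmult g h)"
  unfolding proj_rep_def by blast

lemma dual_rep_unitary: "dual_group_rep m V \<Longrightarrow> \<chi> \<in> chars m \<Longrightarrow> unitary_op (2 ^ m) (V \<chi>)"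
  unfolding dual_group_rep_def by blast

lemma dual_rep_carrier: "dual_group_rep m V \<Longrightarrow> \<chi> \<in> chars m \<Longrightarrow> V \<chi> \<in> carrier_mat (2 ^ m) (2 ^ m)"
  using dual_rep_unitary unfolding unitary_op_def by blast

lemma dual_rep_mult:
  "dual_group_rep m V \<Longrightarrow> \<chi> \<in> chars m \<Longrightarrow> \<eta> \<in> chars m \<Longrightarrow> V \<chi> * V \<eta> = V (cmult \<chi> \<eta>)"
  unfolding dual_group_rep_def by metis

lemma dual_rep_cunit: "dual_group_rep m V \<Longrightarrow> V (cunit m) = 1\<^sub>m (2 ^ m)"
  unfolding dual_group_rep_def by blast

lemma dual_group_rep_diag_op:
  assumes o: "orthonormal_family m ket"
  shows "dual_group_rep m (diag_op m ket)"
  unfolding dual_group_rep_def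
proof (intro conjI ballI)
  fix \<chi> assume \<chi>: "\<chi> \<in> chars m"
  have "diag_op m ket \<chi> * diag_op m ket \<chi> = 1\<^sub>m (2 ^ m)"
    unfolding diag_op_mult[OF o] by (rule diag_op_eq_one[OF o]) (rule char_square[OF \<chi>])
  then show "unitary_op (2 ^ m) (diag_op m ket \<chi>)"
    unfolding unitary_op_def adj_diag_op_char[OF \<chi>] using diag_op_carrier by blast
next
  fix \<chi> \<eta> show "diag_op m ket (cmult \<chi> \<eta>) = diag_op m ket \<chi> * diag_op m ket \<eta>"
    unfolding diag_op_mult[OF o] cmult_def ..
qed (rule diag_op_eq_one[OF o], simp add: cunit_def)

lemma is_dual_diag_op:
  assumes rep: "proj_rep m U c" and cov: "covariant_basis m U c ket"
  shows "is_dual m U (diag_op m ket)"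
  unfolding is_dual_def
proof (intro ballI)
  fix g \<chi> assume g: "g \<in> grp m" and \<chi>: "\<chi> \<in> chars m"
  have o: "orthonormal_family m ket"
    using cov unfolding covariant_basis_def orth_basis_iff_orthonormal_family by blast
  note car = orthonormal_family_carrier[OF o]
  note Ug = proj_rep_carrier[OF rep g]
  let ?D = "diag_op m ket \<chi>"
  show "U g * ?D = \<chi> g \<cdot>\<^sub>m (?D * U g)"
  proof (rule mat_eq_if_agree_on_orthonormal_family[OF o])
    fix h assume h: "h \<in> grp m"
    have gh: "gmult g h \<in> grp m" using g h by (rule gmult_in_grp)
    have Ugh: "U g *\<^sub>v ket h = c g h \<cdot>\<^sub>v ket (gmult g h)"
      using cov g h unfolding covariant_basis_def by blast
    have "(U g * ?D) *\<^sub>v ket h = U g *\<^sub>v (?D *\<^sub>v ket h)"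
      by (rule assoc_mult_mat_vec[OF Ug diag_op_carrier car[OF h]])
    also have "\<dots> = \<chi> h \<cdot>\<^sub>v (U g *\<^sub>v ket h)"
      by (simp add: diag_op_mult_ket[OF o h] mult_mat_vec[OF Ug car[OF h]])
    also have "\<dots> = (\<chi> g * c g h * \<chi> (gmult g h)) \<cdot>\<^sub>v ket (gmult g h)"
      using char_gmult[OF \<chi> g h] char_square[OF \<chi> g]
      by (simp add: Ugh smult_smult_assoc) (metis mult.assoc mult.commute mult.left_commute mult_1)
    also have "\<dots> = \<chi> g \<cdot>\<^sub>v (?D *\<^sub>v (U g *\<^sub>v ket h))"
      using car[OF gh]
      by (simp add: Ugh mult_mat_vec[OF diag_op_carrier] diag_op_mult_ket[OF o gh] smult_smult_assoc mult_ac)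
    also have "\<dots> = \<chi> g \<cdot>\<^sub>v ((?D * U g) *\<^sub>v ket h)"
      by (simp add: assoc_mult_mat_vec[OF diag_op_carrier Ug car[OF h]])
    also have "\<dots> = (\<chi> g \<cdot>\<^sub>m (?D * U g)) *\<^sub>v ket h"
      by (simp add: smult_mat_mult_vec[OF mult_carrier_mat[OF diag_op_carrier Ug] car[OF h]])
    finally show "(U g * ?D) *\<^sub>v ket h = (\<chi> g \<cdot>\<^sub>m (?D * U g)) *\<^sub>v ket h" .
  qed (use Ug in \<open>auto simp: diag_op_carrier intro!: smult_carrier_mat mult_carrier_mat[of _ "2 ^ m" "2 ^ m"]\<close>)
qed

lemma tr_dual_rep_nontrivial:
  assumes rep: "proj_rep m U c" and V: "dual_group_rep m V" and d: "is_dual m U V"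
    and \<psi>: "\<psi> \<in> chars m" and "\<psi> \<noteq> cunit m"
  shows "tr (V \<psi>) = 0"
proof -
  obtain x where x: "x \<in> grp m" "\<psi> x = -1"
    using nontrivial_char_takes_minus_1[OF \<psi> \<open>\<psi> \<noteq> cunit m\<close>] by blast
  have "U x * V \<psi> = (-1) \<cdot>\<^sub>m (V \<psi> * U x)" using d x \<psi> unfolding is_dual_def by metis
  then show ?thesis
    by (rule tr_eq_0_if_anticommutes_with_unitary[OF proj_rep_unitary[OF rep x(1)] dual_rep_carrier[OF V \<psi>]])
qed

lemma sum_tr_dual_rep:
  assumes rep: "proj_rep m U c" and V: "dual_group_rep m V" and d: "is_dual m U V"
  shows "(\<Sum>\<psi>\<in>chars m. tr (V \<psi>)) = 2 ^ m"
proof -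
  have "(\<Sum>\<psi>\<in>chars m. tr (V \<psi>)) = tr (V (cunit m)) + (\<Sum>\<psi>\<in>chars m - {cunit m}. tr (V \<psi>))"
    by (rule sum.remove[OF finite_chars cunit_in_chars])
  also have "(\<Sum>\<psi>\<in>chars m - {cunit m}. tr (V \<psi>)) = 0"
    by (intro sum.neutral ballI) (auto intro: tr_dual_rep_nontrivial[OF rep V d])
  finally show ?thesis by (simp add: dual_rep_cunit[OF V] tr_one)
qed

text \<open>Every column of the average \<open>\<Sum>\<^sub>\<psi> V \<psi>\<close> is fixed by all \<open>V \<chi>\<close>, and its trace is nonzero.\<close>

lemma exists_common_fixed_vector:
  assumes V: "dual_group_rep m V" and tr_ne: "(\<Sum>\<psi>\<in>chars m. tr (V \<psi>)) \<noteq> 0"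
  shows "\<exists>v\<in>carrier_vec (2 ^ m). v \<noteq> 0\<^sub>v (2 ^ m) \<and> (\<forall>\<chi>\<in>chars m. V \<chi> *\<^sub>v v = v)"
proof -
  define n :: nat where "n = 2 ^ m"
  note Vc = dual_rep_carrier[OF V, folded n_def]
  define P where "P = mat n n (\<lambda>(i, j). \<Sum>\<psi>\<in>chars m. V \<psi> $$ (i, j))"
  have P: "P \<in> carrier_mat n n" unfolding P_def by simp
  have VP: "V \<chi> * P = P" if \<chi>: "\<chi> \<in> chars m" for \<chi>
  proof (rule eq_matI)
    fix i j assume "i < dim_row P" "j < dim_col P"
    then have ij: "i < n" "j < n" unfolding P_def by auto
    have "(V \<chi> * P) $$ (i, j) = (\<Sum>k<n. \<Sum>\<psi>\<in>chars m. V \<chi> $$ (i, k) * V \<psi> $$ (k, j))"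
      using ij Vc[OF \<chi>] unfolding P_def by (simp add: scalar_prod_def sum_distrib_left atLeast0LessThan)
    also have "\<dots> = (\<Sum>\<psi>\<in>chars m. (V \<chi> * V \<psi>) $$ (i, j))"
    proof (subst sum.swap, intro sum.cong refl)
      fix \<psi> assume "\<psi> \<in> chars m"
      then show "(\<Sum>k<n. V \<chi> $$ (i, k) * V \<psi> $$ (k, j)) = (V \<chi> * V \<psi>) $$ (i, j)"
        using ij Vc[OF \<chi>] Vc[of \<psi>] by (simp add: scalar_prod_def atLeast0LessThan)
    qed
    also have "\<dots> = (\<Sum>\<psi>\<in>chars m. V (cmult \<chi> \<psi>) $$ (i, j))"
      by (simp add: dual_rep_mult[OF V \<chi>])
    also have "\<dots> = (\<Sum>\<psi>\<in>chars m. V \<psi> $$ (i, j))"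
      by (rule sum.reindex_bij_betw[OF bij_betw_cmult[OF \<chi>]])
    finally show "(V \<chi> * P) $$ (i, j) = P $$ (i, j)" using ij unfolding P_def by simp
  qed (use Vc[OF \<chi>] P in auto)
  have "(\<Sum>j<n. P $$ (j, j)) = (\<Sum>\<psi>\<in>chars m. \<Sum>j<n. V \<psi> $$ (j, j))"
    unfolding P_def by (simp add: sum.swap[of _ "chars m"])
  also have "\<dots> = (\<Sum>\<psi>\<in>chars m. tr (V \<psi>))"
    unfolding tr_def using Vc by (intro sum.cong refl) auto
  finally have "(\<Sum>j<n. P $$ (j, j)) = (\<Sum>\<psi>\<in>chars m. tr (V \<psi>))" .
  then obtain j where j: "j < n" "P $$ (j, j) \<noteq> 0"
    using tr_ne by (metis (no_types, lifting) lessThan_iff sum.neutral)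
  have "V \<chi> *\<^sub>v col P j = col P j" if "\<chi> \<in> chars m" for \<chi>
    using col_mult2[OF Vc[OF that] P j(1)] VP[OF that] by simp
  moreover have "col P j \<noteq> 0\<^sub>v n" using j P by (metis carrier_matD index_col index_zero_vec(1))
  ultimately show ?thesis using P j(1) unfolding n_def by auto
qed

lemma exists_common_fixed_unit_vector:
  assumes rep: "proj_rep m U c" and V: "dual_group_rep m V" and d: "is_dual m U V"
  shows "\<exists>u\<in>carrier_vec (2 ^ m). ip u u = 1 \<and> (\<forall>\<chi>\<in>chars m. V \<chi> *\<^sub>v u = u)"
proof -
  obtain v where v: "v \<in> carrier_vec (2 ^ m)" "v \<noteq> 0\<^sub>v (2 ^ m)"
    and fixed: "\<And>\<chi>. \<chi> \<in> chars m \<Longrightarrow> V \<chi> *\<^sub>v v = v"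
    using exists_common_fixed_vector[OF V] sum_tr_dual_rep[OF rep V d] by force
  obtain a where "ip (a \<cdot>\<^sub>v v) (a \<cdot>\<^sub>v v) = 1" using exists_unit_multiple[OF v] by blast
  moreover have "V \<chi> *\<^sub>v (a \<cdot>\<^sub>v v) = a \<cdot>\<^sub>v v" if "\<chi> \<in> chars m" for \<chi>
    using mult_mat_vec[OF dual_rep_carrier[OF V that] v(1)] fixed[OF that] by simp
  moreover have "a \<cdot>\<^sub>v v \<in> carrier_vec (2 ^ m)" using v(1) by simp
  ultimately show ?thesis by blast
qed

lemma dual_rep_eigenvector:
  assumes rep: "proj_rep m U c" and V: "dual_group_rep m V" and d: "is_dual m U V"
    and \<chi>: "\<chi> \<in> chars m" and g: "g \<in> grp m"
    and u: "u \<in> carrier_vec (2 ^ m)" and fixed: "V \<chi> *\<^sub>v u = u"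
  shows "V \<chi> *\<^sub>v (U g *\<^sub>v u) = \<chi> g \<cdot>\<^sub>v (U g *\<^sub>v u)"
proof -
  note Ug = proj_rep_carrier[OF rep g] and V\<chi> = dual_rep_carrier[OF V \<chi>]
  have "U g *\<^sub>v u = (U g * V \<chi>) *\<^sub>v u" using Ug V\<chi> u fixed by simp
  also have "\<dots> = \<chi> g \<cdot>\<^sub>v (V \<chi> *\<^sub>v (U g *\<^sub>v u))"
    using d \<chi> g Ug V\<chi> u unfolding is_dual_def
    by (simp add: smult_mat_mult_vec[OF mult_carrier_mat[OF V\<chi> Ug]])
  finally have "\<chi> g \<cdot>\<^sub>v (U g *\<^sub>v u) = (\<chi> g * \<chi> g) \<cdot>\<^sub>v (V \<chi> *\<^sub>v (U g *\<^sub>v u))"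
    by (metis smult_smult_assoc)
  then show ?thesis using char_square[OF \<chi> g] by simp
qed

lemma covariant_basis_orbit:
  assumes rep: "proj_rep m U c" and V: "dual_group_rep m V" and d: "is_dual m U V"
    and u: "u \<in> carrier_vec (2 ^ m)" "ip u u = 1" and fixed: "\<forall>\<chi>\<in>chars m. V \<chi> *\<^sub>v u = u"
  shows "covariant_basis m U c (\<lambda>g. U g *\<^sub>v u)"
proof -
  note Uc = proj_rep_carrier[OF rep]
  have car: "U g *\<^sub>v u \<in> carrier_vec (2 ^ m)" if "g \<in> grp m" for g
    using Uc[OF that] u(1) by simp
  have "ip (U g *\<^sub>v u) (U h *\<^sub>v u) = 0" if g: "g \<in> grp m" and h: "h \<in> grp m" and "g \<noteq> h" for g h
  proof -
    obtain \<chi> where \<chi>: "\<chi> \<in> chars m" and "\<chi> g * \<chi> h = -1"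
      using chars_separate_points[OF g h \<open>g \<noteq> h\<close>] by blast
    then have "cnj (\<chi> g) * \<chi> h \<noteq> 1" using cnj_char[OF \<chi> g] by simp
    then show ?thesis
      using unitary_eigenvectors_orthogonal[OF dual_rep_unitary[OF V \<chi>] car[OF g] car[OF h]]
        dual_rep_eigenvector[OF rep V d \<chi> _ u(1)] fixed \<chi> g h by blast
  qed
  moreover have "ip (U g *\<^sub>v u) (U g *\<^sub>v u) = 1" if "g \<in> grp m" for g
    using ip_unitary[OF proj_rep_unitary[OF rep that] u(1) u(1)] u(2) by simp
  ultimately have "orthonormal_family m (\<lambda>g. U g *\<^sub>v u)"
    unfolding orthonormal_family_def using car by auto
  moreover have "U g *\<^sub>v (U h *\<^sub>v u) = c g h \<cdot>\<^sub>v (U (gmult g h) *\<^sub>v u)"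
    if g: "g \<in> grp m" and h: "h \<in> grp m" for g h
  proof -
    have "U g *\<^sub>v (U h *\<^sub>v u) = (U g * U h) *\<^sub>v u" using Uc[OF g] Uc[OF h] u(1) by simp
    also have "\<dots> = c g h \<cdot>\<^sub>v (U (gmult g h) *\<^sub>v u)"
      unfolding proj_rep_mult[OF rep g h] by (rule smult_mat_mult_vec[OF Uc[OF gmult_in_grp[OF g h]] u(1)])
    finally show ?thesis .
  qed
  ultimately show ?thesis
    unfolding covariant_basis_def orth_basis_iff_orthonormal_family by blast
qed

lemma covariant_basis_of_dual_rep:
  assumes rep: "proj_rep m U c" and V: "dual_group_rep m V" and d: "is_dual m U V"
  shows "\<exists>ket. covariant_basis m U c ket \<and> (\<forall>\<chi>\<in>chars m. V \<chi> = diag_op m ket \<chi>)"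
proof -
  obtain u where u: "u \<in> carrier_vec (2 ^ m)" "ip u u = 1" and fixed: "\<forall>\<chi>\<in>chars m. V \<chi> *\<^sub>v u = u"
    using exists_common_fixed_unit_vector[OF rep V d] by blast
  define ket where "ket = (\<lambda>g. U g *\<^sub>v u)"
  have cov: "covariant_basis m U c ket"
    unfolding ket_def by (rule covariant_basis_orbit[OF rep V d u fixed])
  then have o: "orthonormal_family m ket"
    unfolding covariant_basis_def orth_basis_iff_orthonormal_family by blast
  have eigen: "V \<chi> *\<^sub>v ket g = \<chi> g \<cdot>\<^sub>v ket g" if "\<chi> \<in> chars m" "g \<in> grp m" for \<chi> g
    unfolding ket_def using dual_rep_eigenvector[OF rep V d that u(1)] fixed that(1) by blast
  have "V \<chi> = diag_op m ket \<chi>" if \<chi>: "\<chi> \<in> chars m" for \<chi>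
    by (intro mat_eq_if_agree_on_orthonormal_family[OF o dual_rep_carrier[OF V \<chi>] diag_op_carrier])
      (simp add: diag_op_mult_ket[OF o] eigen[OF \<chi>])
  with cov show ?thesis by blast
qed

lemma dual_rep_square:
  assumes "dual_group_rep m V" "\<chi> \<in> chars m"
  shows "V \<chi> * V \<chi> = 1\<^sub>m (2 ^ m)"
  using assms by (simp add: dual_rep_mult cmult_self dual_rep_cunit)

lemma tr_dual_rep_mult:
  assumes rep: "proj_rep m U c" and V: "dual_group_rep m V" and d: "is_dual m U V"
    and \<chi>: "\<chi> \<in> chars m" and \<eta>: "\<eta> \<in> chars m"
  shows "tr (V \<chi> * V \<eta>) = (if \<chi> = \<eta> then 2 ^ m else 0)"
proof (cases "\<chi> = \<eta>")
  case True
  then show ?thesis using dual_rep_square[OF V \<chi>] by (simp add: tr_one)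
next
  case False
  then have "cmult \<chi> \<eta> \<noteq> cunit m" using cmult_eq_cunit_iff[OF \<chi> \<eta>] by simp
  then show ?thesis
    using False tr_dual_rep_nontrivial[OF rep V d cmult_in_chars[OF \<chi> \<eta>]] dual_rep_mult[OF V \<chi> \<eta>]
    by simp
qed

theorem mainTheorem6:
  fixes m :: nat
    and U :: "bool list \<Rightarrow> complex mat"
    and c :: "bool list \<Rightarrow> bool list \<Rightarrow> complex"
  assumes rep: "proj_rep m U c"
    and faithful: "inj_on U (grp m)"
    and no_minus_id: "\<forall>g\<in>grp m. U g \<noteq> - (1\<^sub>m (2^m))"
    and ideal: "\<exists>ket. covariant_basis m U c ket"
  shows "(\<forall>ket. covariant_basis m U c ket \<longrightarrow>
            dual_group_rep m (diag_op m ket) \<and> is_dual m U (diag_op m ket))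
       \<and> (\<forall>V. dual_group_rep m V \<and> is_dual m U V \<longrightarrow>
            (\<exists>ket. covariant_basis m U c ket \<and> (\<forall>\<chi>\<in>chars m. V \<chi> = diag_op m ket \<chi>)))
       \<and> (\<forall>V. dual_group_rep m V \<and> is_dual m U V \<longrightarrow>
            (\<forall>\<chi>\<in>chars m. V \<chi> * V \<chi> = 1\<^sub>m (2^m))
          \<and> (\<forall>\<chi>\<in>chars m. \<forall>\<eta>\<in>chars m.
               tr (V \<chi> * V \<eta>) = (if \<chi> = \<eta> then 2^m else 0)))"
proof (intro conjI allI impI ballI)
  fix ket assume cov: "covariant_basis m U c ket"
  then have "orthonormal_family m ket"
    unfolding covariant_basis_def orth_basis_iff_orthonormal_family by blast
  then show "dual_group_rep m (diag_op m ket)" by (rule dual_group_rep_diag_op)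
  show "is_dual m U (diag_op m ket)" using rep cov by (rule is_dual_diag_op)
next
  fix V assume "dual_group_rep m V \<and> is_dual m U V"
  then show "\<exists>ket. covariant_basis m U c ket \<and> (\<forall>\<chi>\<in>chars m. V \<chi> = diag_op m ket \<chi>)"
    using covariant_basis_of_dual_rep[OF rep] by blast
next
  fix V \<chi> assume "dual_group_rep m V \<and> is_dual m U V" "\<chi> \<in> chars m"
  then show "V \<chi> * V \<chi> = 1\<^sub>m (2 ^ m)" using dual_rep_square by blast
next
  fix V \<chi> \<eta> assume "dual_group_rep m V \<and> is_dual m U V" "\<chi> \<in> chars m" "\<eta> \<in> chars m"
  then show "tr (V \<chi> * V \<eta>) = (if \<chi> = \<eta> then 2 ^ m else 0)"
    using tr_dual_rep_mult[OF rep] by blast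
qed

end
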